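(* Let $k>1$ and let $f:\mathbb{R}\to\mathbb{R}$ be a positive, continuously differentiable function. Then the planar system $$\frac{dI}{d\tau}=I\,[f(R)(1-I-R)-k],\qquad \frac{dR}{d\tau}=(k-1)I-R$$ has no non-constant periodic solution $(I(\tau),R(\tau))$ with $I(\tau)>0$ for all $\tau$. *)

theory Defs
  imports "HOL-Analysis.Analysis"
begin

end

theory Submission
  imports Defs "HOL-Analysis.Analysis"
begin

text \<open>
  Along a solution with \<open>I > 0\<close> we also have \<open>R > 0\<close>, since \<open>R\<close> is a periodic solution of
  \<open>R' = p - R\<close> with positive forcing \<open>p = (k - 1) I\<close>. Put \<open>y = (k - 1) I\<close> and let \<open>G\<close> be an
  antiderivative of \<open>g(r) = f(r) (1 - k r / (k - 1)) - k\<close>. Then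
  \<open>V = y - R - R ln y + R ln R - G(R)\<close> satisfies
  \<open>V' = - f(R) (y - R)\<^sup>2 / (k - 1) - (y - R) (ln y - ln R) \<le> 0\<close>, with equality only where
  \<open>y = R\<close>. A periodic function with nonpositive derivative has derivative zero everywhere,
  so \<open>y = R\<close> throughout; then \<open>R' = 0\<close>, and both \<open>R\<close> and \<open>I = R / (k - 1)\<close> are constant.
\<close>

lemma real_antiderivative_exists:
  fixes g :: "real \<Rightarrow> real"
  assumes "\<And>x. isCont g x"
  shows "\<exists>G. \<forall>x. (G has_real_derivative g x) (at x)"
proof -
  have "\<exists>G. \<forall>x :: real. -\<infinity> < ereal x \<longrightarrow> ereal x < \<infinity> \<longrightarrow> (G has_vector_derivative g x) (at x)"
    by (rule einterval_antiderivative) (auto simp: assms)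
  then show ?thesis
    by (simp add: has_real_derivative_iff_has_vector_derivative)
qed

lemma diff_mult_ln_diff_nonneg:
  fixes a b :: real
  assumes "a > 0" "b > 0"
  shows "(a - b) * (ln a - ln b) \<ge> 0"
  using assms by (cases "a \<le> b") (auto intro: mult_nonpos_nonpos)

lemma periodic_solution_positive_forcing_pos:
  fixes R p :: "real \<Rightarrow> real" and T :: real
  assumes "T > 0"
    and deriv: "\<And>t. (R has_real_derivative p t - R t) (at t)"
    and p_pos: "\<And>t. p t > 0"
    and periodic: "\<And>t. R (t + T) = R t"
  shows "R t > 0"
proof -
  have "R t * exp t < R (t + T) * exp (t + T)"
  proof (rule DERIV_pos_imp_increasing[where f = "\<lambda>s. R s * exp s", simplified])
    show "t < t + T"
      using \<open>T > 0\<close> by simp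
    fix s
    have "((\<lambda>s. R s * exp s) has_real_derivative p s * exp s) (at s)"
      by (auto intro!: derivative_eq_intros deriv simp: algebra_simps)
    moreover have "p s * exp s > 0"
      using p_pos[of s] by simp
    ultimately show "\<exists>d. ((\<lambda>s. R s * exp s) has_real_derivative d) (at s) \<and> d > 0"
      by blast
  qed
  then have "R t * exp t < (R t * exp T) * exp t"
    unfolding periodic exp_add by (simp add: mult_ac)
  then have "R t < R t * exp T"
    by (simp only: mult_less_cancel_right_pos[OF exp_gt_zero])
  then have "0 < R t * (exp T - 1)"
    by (simp add: right_diff_distrib)
  moreover have "exp T > 1"
    using \<open>T > 0\<close> by simp
  ultimately show "R t > 0"
    by (simp add: zero_less_mult_iff)
qed

lemma periodic_deriv_nonpos_imp_zero:
  fixes V D :: "real \<Rightarrow> real" and T :: real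
  assumes "T > 0"
    and deriv: "\<And>t. (V has_real_derivative D t) (at t)"
    and nonpos: "\<And>t. D t \<le> 0"
    and periodic: "\<And>t. V (t + T) = V t"
  shows "D t = 0"
proof (rule ccontr)
  assume "D t \<noteq> 0"
  with nonpos have "D t < 0"
    by (simp add: order_less_le)
  then obtain d where "d > 0" and decreasing: "\<And>h. 0 < h \<Longrightarrow> h < d \<Longrightarrow> V (t + h) < V t"
    using DERIV_neg_dec_right[OF deriv] by blast
  define h where "h = min (d / 2) T"
  have h: "0 < h" "h < d" "h \<le> T"
    using \<open>d > 0\<close> \<open>T > 0\<close> by (auto simp: h_def)
  have "V (t + T) \<le> V (t + h)"
    by (rule DERIV_nonpos_imp_nonincreasing) (use h deriv nonpos in auto)
  with decreasing[OF h(1,2)] periodic[of t] show False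
    by simp
qed

lemma lyapunov_rate_nonpos:
  fixes F k y r :: real
  assumes "F > 0" "k > 1" "y > 0" "r > 0"
  shows "- F * (y - r)\<^sup>2 / (k - 1) - (y - r) * (ln y - ln r) \<le> 0"
    and "- F * (y - r)\<^sup>2 / (k - 1) - (y - r) * (ln y - ln r) = 0 \<Longrightarrow> y = r"
proof -
  have "F * (y - r)\<^sup>2 / (k - 1) \<ge> 0"
    using assms by simp
  moreover have ln_term: "(y - r) * (ln y - ln r) \<ge> 0"
    using assms by (simp add: diff_mult_ln_diff_nonneg)
  ultimately show "- F * (y - r)\<^sup>2 / (k - 1) - (y - r) * (ln y - ln r) \<le> 0"
    by simp
  assume "- F * (y - r)\<^sup>2 / (k - 1) - (y - r) * (ln y - ln r) = 0"
  with ln_term have "F * (y - r)\<^sup>2 / (k - 1) = 0"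
    using \<open>F * (y - r)\<^sup>2 / (k - 1) \<ge> 0\<close> by linarith
  with assms show "y = r"
    by simp
qed

lemma lyapunov_has_derivative:
  fixes F G y R :: "real \<Rightarrow> real" and k :: real
  assumes "k > 1"
    and dy: "(y has_real_derivative y t * (F (R t) * (1 - y t / (k - 1) - R t) - k)) (at t)"
    and dR: "(R has_real_derivative y t - R t) (at t)"
    and dG: "(G has_real_derivative F (R t) * (1 - k * R t / (k - 1)) - k) (at (R t))"
    and "y t > 0" "R t > 0"
  shows "((\<lambda>s. y s - R s - R s * ln (y s) + R s * ln (R s) - G (R s)) has_real_derivative
           - F (R t) * (y t - R t)\<^sup>2 / (k - 1) - (y t - R t) * (ln (y t) - ln (R t))) (at t)"
proof -
  have dGR: "((\<lambda>s. G (R s)) has_real_derivative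
               (F (R t) * (1 - k * R t / (k - 1)) - k) * (y t - R t)) (at t)"
    by (rule DERIV_chain2[OF dG dR])
  have "((\<lambda>s. y s - R s - R s * ln (y s) + R s * ln (R s) - G (R s)) has_real_derivative
           y t * (F (R t) * (1 - y t / (k - 1) - R t) - k) - (y t - R t)
           - ((y t - R t) * ln (y t) + R t * (y t * (F (R t) * (1 - y t / (k - 1) - R t) - k) / y t))
           + ((y t - R t) * ln (R t) + R t * ((y t - R t) / R t))
           - (F (R t) * (1 - k * R t / (k - 1)) - k) * (y t - R t)) (at t)"
    (is "(_ has_real_derivative ?chain_rule) _")
    using assms by (auto intro!: derivative_eq_intros dGR)
  moreover have "?chain_rule
         = - F (R t) * (y t - R t)\<^sup>2 / (k - 1) - (y t - R t) * (ln (y t) - ln (R t))"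
  proof -
    \<comment> \<open>\<open>field_simps\<close> cannot use \<open>k - 1 \<noteq> 0\<close>, which simp turns into \<open>k \<noteq> 1\<close>\<close>
    obtain c where "c > 0" "k = c + 1"
      using \<open>k > 1\<close> by (metis diff_add_cancel diff_gt_0_iff_gt)
    with assms show ?thesis
      by (simp add: field_simps power2_eq_square)
  qed
  ultimately show ?thesis
    by simp
qed

lemma periodic_rescaled_solution_on_diagonal:
  fixes F y R :: "real \<Rightarrow> real" and k T :: real
  assumes k: "k > 1" and "T > 0"
    and F_cont: "\<And>r. isCont F r" and F_pos: "\<And>r. F r > 0"
    and dy: "\<And>t. (y has_real_derivative y t * (F (R t) * (1 - y t / (k - 1) - R t) - k)) (at t)"
    and dR: "\<And>t. (R has_real_derivative y t - R t) (at t)"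
    and y_pos: "\<And>t. y t > 0"
    and periodic: "\<And>t. y (t + T) = y t" "\<And>t. R (t + T) = R t"
  shows "y t = R t"
proof -
  have R_pos: "R t > 0" for t
    using periodic_solution_positive_forcing_pos[OF \<open>T > 0\<close> dR y_pos periodic(2)] .
  have "isCont (\<lambda>r. F r * (1 - k * r / (k - 1)) - k) r" for r
    using F_cont k by (auto intro!: continuous_intros)
  then obtain G where dG: "\<And>r. (G has_real_derivative F r * (1 - k * r / (k - 1)) - k) (at r)"
    using real_antiderivative_exists by blast
  define V where "V s = y s - R s - R s * ln (y s) + R s * ln (R s) - G (R s)" for s
  have dV: "(V has_real_derivative
              - F (R t) * (y t - R t)\<^sup>2 / (k - 1) - (y t - R t) * (ln (y t) - ln (R t))) (at t)" for t
    unfolding V_def[abs_def] by (rule lyapunov_has_derivative[where F = F, OF k dy dR dG y_pos R_pos])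
  have "- F (R t) * (y t - R t)\<^sup>2 / (k - 1) - (y t - R t) * (ln (y t) - ln (R t)) = 0"
    by (rule periodic_deriv_nonpos_imp_zero[OF \<open>T > 0\<close> dV])
      (use lyapunov_rate_nonpos(1) F_pos k y_pos R_pos periodic in \<open>auto simp: V_def\<close>)
  then show "y t = R t"
    using lyapunov_rate_nonpos(2) F_pos k y_pos R_pos by blast
qed

theorem lemma2:
  fixes k :: real and f f' :: "real \<Rightarrow> real"
  assumes k: "k > 1"
    and f_pos: "\<forall>x. f x > 0"
    and f_deriv: "\<forall>x. (f has_real_derivative f' x) (at x)"
    and f'_cont: "continuous_on UNIV f'"
  shows "\<not> (\<exists>(I :: real \<Rightarrow> real) (R :: real \<Rightarrow> real) (T :: real).
            T > 0
          \<and> (\<forall>\<tau>. (I has_real_derivative I \<tau> * (f (R \<tau>) * (1 - I \<tau> - R \<tau>) - k)) (at \<tau>))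
          \<and> (\<forall>\<tau>. (R has_real_derivative (k - 1) * I \<tau> - R \<tau>) (at \<tau>))
          \<and> (\<forall>\<tau>. I (\<tau> + T) = I \<tau> \<and> R (\<tau> + T) = R \<tau>)
          \<and> (\<forall>\<tau>. I \<tau> > 0)
          \<and> \<not> (\<exists>c d. \<forall>\<tau>. I \<tau> = c \<and> R \<tau> = d))"
proof
  assume "\<exists>I R T. T > 0
          \<and> (\<forall>\<tau>. (I has_real_derivative I \<tau> * (f (R \<tau>) * (1 - I \<tau> - R \<tau>) - k)) (at \<tau>))
          \<and> (\<forall>\<tau>. (R has_real_derivative (k - 1) * I \<tau> - R \<tau>) (at \<tau>))
          \<and> (\<forall>\<tau>. I (\<tau> + T) = I \<tau> \<and> R (\<tau> + T) = R \<tau>)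
          \<and> (\<forall>\<tau>. I \<tau> > 0)
          \<and> \<not> (\<exists>c d. \<forall>\<tau>. I \<tau> = c \<and> R \<tau> = d)"
  then obtain I R T where "T > 0"
    and dI: "\<And>t. (I has_real_derivative I t * (f (R t) * (1 - I t - R t) - k)) (at t)"
    and dR: "\<And>t. (R has_real_derivative (k - 1) * I t - R t) (at t)"
    and periodic: "\<And>t. I (t + T) = I t" "\<And>t. R (t + T) = R t"
    and I_pos: "\<And>t. I t > 0"
    and nonconstant: "\<not> (\<exists>c d. \<forall>t. I t = c \<and> R t = d)"
    by blast
  define y where "y t = (k - 1) * I t" for t
  have y_pos: "y t > 0" for t
    using I_pos[of t] k by (simp add: y_def)
  have dy: "(y has_real_derivative y t * (f (R t) * (1 - y t / (k - 1) - R t) - k)) (at t)" for t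
  proof -
    have "(y has_real_derivative (k - 1) * (I t * (f (R t) * (1 - I t - R t) - k))) (at t)"
      unfolding y_def[abs_def] by (rule DERIV_cmult[OF dI])
    moreover have "y t / (k - 1) = I t"
      using k by (simp add: y_def)
    ultimately show ?thesis
      by (simp add: y_def mult.assoc)
  qed
  have dR_y: "(R has_real_derivative y t - R t) (at t)" for t
    using dR[of t] by (simp add: y_def)
  have f_cont: "isCont f r" for r
    using f_deriv DERIV_isCont by blast
  have y_periodic: "y (t + T) = y t" for t
    by (simp add: y_def periodic)
  have "y t = R t" for t
    by (rule periodic_rescaled_solution_on_diagonal[OF k \<open>T > 0\<close> f_cont f_pos[rule_format]
          dy dR_y y_pos y_periodic periodic(2)])
  then have "R t = R 0" for t
    using dR_y DERIV_isconst_all[of R] by (metis diff_self)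
  moreover have "I t = R 0 / (k - 1)" for t
    using \<open>y t = R t\<close> \<open>R t = R 0\<close> k by (simp add: y_def field_simps)
  ultimately show False
    using nonconstant by blast
qed

end
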